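(* Fix $q\in(0,1]$ and $\delta\in(0,1)$. With probability at least $1-\delta/3$, for all $t\in[T]$ and $a\in[K]$, $$M_{t,a}\ \ge\ q\,N_{t-d_a(q),a}-\sqrt{\frac{\log(3KT/\delta)}{2}\,N_{t,a}}.$$
   Context: Combinatorial semi-bandit with (possibly reward-dependent) delayed feedback: $K$ arms, horizon $T$; at each round $t$ the learner picks (based on the history of past choices and observed feedback) a vector $p_t\in[0,1]^K$ with $\sum_a p_{t,a}=L$ and a random set $A_t\subseteq[K]$, $|A_t|=L$, with $\Pr(a\in A_t\mid\text{history},p_t)=p_{t,a}$. Each arm $a$ has pairs $(R_{t,a},D_{t,a})$, $t\ge1$, with $R_{t,a}\in[0,1]$ and delay $D_{t,a}\in\{0,1,\dots\}\cup\{\infty\}$; for each arm the pairs are i.i.d. across rounds and independent of everything before round $t$. The feedback of arm $a\in A_s$ is observed at round $t$ iff $s+D_{s,a}<t$. $N_{t,a}=\sum_{s<t}\mathbb 1\{a\in A_s\}$ (with $N_{t,a}=0$ for $t\le1$, including nonpositive $t$) and $M_{t,a}=\sum_{s<t}\mathbb 1\{a\in A_s,\ s+D_{s,a}<t\}$. The $q$-quantile of arm $a$'s delay is $d_a(q)=\min\{\gamma\in\mathbb N:\Pr(D_{1,a}\le\gamma)\ge q\}$. *)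

theory Defs
  imports "HOL-Probability.Probability"
begin

text \<open>Semi-bandit with delayed feedback. Rounds are 1,2,...; arms are 1..K.
  A s w : set of arms played in round s; R s a w : reward; D s a w : delay (enat, \<infinity> allowed).\<close>

text \<open>N_{t,a}: number of rounds s < t (s \<ge> 1) in which arm a was played; t is an integer,
  so N is 0 for t \<le> 1 (including nonpositive t).\<close>
definition Ncnt :: "(nat \<Rightarrow> 'w \<Rightarrow> nat set) \<Rightarrow> int \<Rightarrow> nat \<Rightarrow> 'w \<Rightarrow> nat" where
  "Ncnt A t a w = card {s::nat. 1 \<le> s \<and> int s < t \<and> a \<in> A s w}"

text \<open>M_{t,a}: number of rounds s < t with a played whose feedback is observed by round t,
  i.e. s + D_{s,a} < t.\<close>
definition Mcnt :: "(nat \<Rightarrow> 'w \<Rightarrow> nat set) \<Rightarrow> (nat \<Rightarrow> nat \<Rightarrow> 'w \<Rightarrow> enat) \<Rightarrow> nat \<Rightarrow> nat \<Rightarrow> 'w \<Rightarrow> nat" where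
  "Mcnt A D t a w = card {s::nat. 1 \<le> s \<and> s < t \<and> a \<in> A s w \<and> enat s + D s a w < enat t}"

definition delay_quantile :: "'w measure \<Rightarrow> (nat \<Rightarrow> nat \<Rightarrow> 'w \<Rightarrow> enat) \<Rightarrow> nat \<Rightarrow> real \<Rightarrow> enat" where
  "delay_quantile M D a q =
     (if \<exists>g::nat. measure M {w \<in> space M. D 1 a w \<le> enat g} \<ge> q
      then enat (LEAST g::nat. measure M {w \<in> space M. D 1 a w \<le> enat g} \<ge> q)
      else \<infinity>)"

definition Nshift :: "(nat \<Rightarrow> 'w \<Rightarrow> nat set) \<Rightarrow> nat \<Rightarrow> enat \<Rightarrow> nat \<Rightarrow> 'w \<Rightarrow> nat" where
  "Nshift A t d a w = (case d of enat k \<Rightarrow> Ncnt A (int t - int k) a w | \<infinity> \<Rightarrow> 0)"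

definition pair_events :: "'w measure \<Rightarrow> (nat \<Rightarrow> nat \<Rightarrow> 'w \<Rightarrow> real) \<Rightarrow> (nat \<Rightarrow> nat \<Rightarrow> 'w \<Rightarrow> enat)
    \<Rightarrow> nat \<Rightarrow> nat \<Rightarrow> 'w set set" where
  "pair_events M R D s a =
     {(\<lambda>w. (R s a w, D s a w)) -` S \<inter> space M | S. S \<in> sets (borel \<Otimes>\<^sub>M count_space UNIV)}"

text \<open>Events describing everything up to (and including the choice of) round t:
  the chosen sets A_s for 1 \<le> s \<le> t and all pairs (R_{s,b},D_{s,b}) for 1 \<le> s < t and arms b in 1..K.\<close>
definition past_events :: "'w measure \<Rightarrow> nat \<Rightarrow> (nat \<Rightarrow> 'w \<Rightarrow> nat set) \<Rightarrow> (nat \<Rightarrow> nat \<Rightarrow> 'w \<Rightarrow> real)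
    \<Rightarrow> (nat \<Rightarrow> nat \<Rightarrow> 'w \<Rightarrow> enat) \<Rightarrow> nat \<Rightarrow> 'w set set" where
  "past_events M K A R D t =
     (\<Union>s\<in>{1..t}. {A s -` S \<inter> space M | S. True}) \<union>
     (\<Union>s\<in>{1..<t}. \<Union>b\<in>{1..K}. pair_events M R D s b)"

end

theory Submission
  imports Defs
begin

text \<open>Fix an arm \<open>a\<close>, the quantile \<open>d = d\<^sub>a(q)\<close> and a number \<open>n\<close> of plays. Given the
  history, the delay of a play is independent of the past and distributed like \<open>D\<^sub>1\<^sub>,\<^sub>a\<close>, so the
  indicator that it is at most \<open>d\<close> has conditional mean \<open>p = P(D\<^sub>1\<^sub>,\<^sub>a \<le> d) \<ge> q\<close>. By Hoeffding's
  lemma the process \<open>exp (\<lambda> \<Sum> (p - X) - \<lambda>\<^sup>2/8 \<cdot> #plays)\<close>, summed over the first \<open>n\<close> plays of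
  \<open>a\<close> only, is a supermartingale, and Markov's inequality shows that the first \<open>n\<close> plays have
  fewer than \<open>p n - \<surd>(n log(3KT/\<delta>)/2)\<close> short delays with probability at most \<open>\<delta>/(3KT)\<close>.
  A union bound over \<open>a\<close> and over the possible values \<open>n \<le> T\<close> of the random count
  \<open>N\<^sub>t\<^sub>-\<^sub>d\<^sub>,\<^sub>a\<close> then applies simultaneously to all rounds, and every play among the first
  \<open>N\<^sub>t\<^sub>-\<^sub>d\<^sub>,\<^sub>a\<close> with delay at most \<open>d\<close> has been observed by round \<open>t\<close>.\<close>

lemma (in prob_space) indep_set_mono:
  assumes "indep_set A B" "A' \<subseteq> A" "B' \<subseteq> B"
  shows "indep_set A' B'"
proof -
  have "indep_sets (case_bool A B) UNIV" using assms(1) unfolding indep_set_def .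
  then show ?thesis unfolding indep_set_def
    by (rule indep_sets_mono_sets) (use assms(2,3) in \<open>auto split: bool.split\<close>)
qed

lemma (in interval_bounded_random_variable) Hoeffdings_lemma_integral:
  assumes "l > 0"
  shows "(\<integral>x. exp (l * (f x - expectation f)) \<partial>M) \<le> exp (l\<^sup>2 * (b - a)\<^sup>2 / 8)"
proof -
  let ?g = "\<lambda>x. exp (l * (f x - expectation f))"
  have "integrable M ?g"
  proof (rule integrable_const_bound)
    show "AE x in M. norm (?g x) \<le> exp (l * (b - expectation f))"
      using AE_in_interval by eventually_elim (use assms in auto)
  qed simp
  then have "ennreal (\<integral>x. ?g x \<partial>M) = nn_integral M ?g"
    by (rule nn_integral_eq_integral[symmetric]) simp
  also have "\<dots> \<le> ennreal (exp (l\<^sup>2 * (b - a)\<^sup>2 / 8))"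
    by (rule Hoeffdings_lemma_nn_integral[OF assms])
  finally show ?thesis by simp
qed

lemma (in finite_measure) integrable_bounded:
  fixes f :: "'a \<Rightarrow> real"
  assumes "f \<in> borel_measurable M" "\<And>x. \<bar>f x\<bar> \<le> B"
  shows "integrable M f"
  using assms by (intro integrable_const_bound[where B = B]) auto

lemma Ncnt_eq_sum: "real (Ncnt A z a w) = (\<Sum>s\<in>{1..<nat z}. of_bool (a \<in> A s w))"
proof -
  have "{s. 1 \<le> s \<and> int s < z \<and> a \<in> A s w} = {1..<nat z} \<inter> {s. a \<in> A s w}" by auto
  then show ?thesis unfolding Ncnt_def by simp
qed

lemma Mcnt_eq_sum:
  "real (Mcnt A D t a w) = (\<Sum>s\<in>{1..<t}. of_bool (a \<in> A s w \<and> enat s + D s a w < enat t))"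
proof -
  have "{s. 1 \<le> s \<and> s < t \<and> a \<in> A s w \<and> enat s + D s a w < enat t}
      = {1..<t} \<inter> {s. a \<in> A s w \<and> enat s + D s a w < enat t}" by auto
  then show ?thesis unfolding Mcnt_def by simp
qed

lemma finite_Ncnt_set: "finite {s::nat. 1 \<le> s \<and> int s < z \<and> a \<in> A s w}"
  by (rule finite_subset[of _ "{..<nat z}"]) auto

lemma Ncnt_mono: "z \<le> z' \<Longrightarrow> Ncnt A z a w \<le> Ncnt A z' a w"
  unfolding Ncnt_def by (intro card_mono finite_Ncnt_set) auto

lemma Ncnt_le:
  assumes "z \<le> int T"
  shows "Ncnt A z a w \<le> T"
proof -
  have "{s. 1 \<le> s \<and> int s < z \<and> a \<in> A s w} \<subseteq> {1..<T}" using assms by auto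
  then have "Ncnt A z a w \<le> card {1..<T}" unfolding Ncnt_def by (intro card_mono) auto
  then show ?thesis by simp
qed

lemma Ncnt_less_Ncnt_iff:
  assumes "1 \<le> r" "a \<in> A r w"
  shows "Ncnt A (int r) a w < Ncnt A z a w \<longleftrightarrow> int r < z"
proof
  assume "int r < z"
  then have "{s. 1 \<le> s \<and> int s < int r \<and> a \<in> A s w} \<subset> {s. 1 \<le> s \<and> int s < z \<and> a \<in> A s w}"
    using assms by auto
  then show "Ncnt A (int r) a w < Ncnt A z a w"
    unfolding Ncnt_def by (intro psubset_card_mono finite_Ncnt_set)
next
  assume "Ncnt A (int r) a w < Ncnt A z a w"
  then show "int r < z" using Ncnt_mono[of z "int r" A a w] by linarith
qed

lemma card_delay_le_Mcnt:
  "card {r. 1 \<le> r \<and> int r < int t - int d \<and> a \<in> A r w \<and> D r a w \<le> enat d} \<le> Mcnt A D t a w"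
  unfolding Mcnt_def
proof (rule card_mono)
  show "finite {s. 1 \<le> s \<and> s < t \<and> a \<in> A s w \<and> enat s + D s a w < enat t}"
    by (rule finite_subset[of _ "{..<t}"]) auto
  show "{r. 1 \<le> r \<and> int r < int t - int d \<and> a \<in> A r w \<and> D r a w \<le> enat d}
      \<subseteq> {s. 1 \<le> s \<and> s < t \<and> a \<in> A s w \<and> enat s + D s a w < enat t}"
  proof safe
    fix r assume r: "1 \<le> r" "int r < int t - int d" "a \<in> A r w" "D r a w \<le> enat d"
    then show "r < t" by linarith
    from r(4) obtain e where "D r a w = enat e" "e \<le> d" by (cases "D r a w") auto
    then show "enat r + D r a w < enat t" using r(2) by simp
  qed
qed

locale delayed_semibandit = prob_space M for M :: "'w measure" +
  fixes K :: nat and A :: "nat \<Rightarrow> 'w \<Rightarrow> nat set"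
    and R :: "nat \<Rightarrow> nat \<Rightarrow> 'w \<Rightarrow> real" and D :: "nat \<Rightarrow> nat \<Rightarrow> 'w \<Rightarrow> enat"
  assumes measurable_A: "\<And>t. 1 \<le> t \<Longrightarrow> A t \<in> measurable M (count_space UNIV)"
    and measurable_R: "\<And>t a. 1 \<le> t \<Longrightarrow> a \<in> {1..K} \<Longrightarrow> R t a \<in> borel_measurable M"
    and measurable_D: "\<And>t a. 1 \<le> t \<Longrightarrow> a \<in> {1..K} \<Longrightarrow> D t a \<in> measurable M (count_space UNIV)"
    and identically_distributed: "\<And>t a. 1 \<le> t \<Longrightarrow> a \<in> {1..K} \<Longrightarrow>
           distr M (borel \<Otimes>\<^sub>M count_space UNIV) (\<lambda>w. (R t a w, D t a w))
         = distr M (borel \<Otimes>\<^sub>M count_space UNIV) (\<lambda>w. (R 1 a w, D 1 a w))"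
    and indep_past: "\<And>t a. 1 \<le> t \<Longrightarrow> a \<in> {1..K} \<Longrightarrow>
           indep_set (sigma_sets (space M) (past_events M K A R D t)) (pair_events M R D t a)"
begin

definition history :: "nat \<Rightarrow> 'w measure" where
  "history t = sigma (space M) (past_events M K A R D t)"

definition delay_cdf :: "nat \<Rightarrow> nat \<Rightarrow> real" where
  "delay_cdf a d = prob {w \<in> space M. D 1 a w \<le> enat d}"

lemma measurable_reward_delay:
  "1 \<le> t \<Longrightarrow> a \<in> {1..K} \<Longrightarrow>
   (\<lambda>w. (R t a w, D t a w)) \<in> measurable M (borel \<Otimes>\<^sub>M count_space UNIV)"
  using measurable_R measurable_D by (intro measurable_Pair) auto

lemma past_events_subset_Pow: "past_events M K A R D t \<subseteq> Pow (space M)"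
  unfolding past_events_def pair_events_def by auto

lemma past_events_subset_events: "past_events M K A R D t \<subseteq> events"
  unfolding past_events_def pair_events_def
  using measurable_sets[OF measurable_A] measurable_sets[OF measurable_reward_delay] by fastforce

lemma sets_history: "sets (history t) = sigma_sets (space M) (past_events M K A R D t)"
  unfolding history_def using past_events_subset_Pow by (rule sets_measure_of)

lemma space_history: "space (history t) = space M"
  unfolding history_def using past_events_subset_Pow by (rule space_measure_of)

lemma sets_history_subset: "sets (history t) \<subseteq> events"
  unfolding sets_history by (rule sets.sigma_sets_subset[OF past_events_subset_events])

lemma subalgebra_history: "subalgebra M (history t)"
  using sets_history_subset space_history unfolding subalgebra_def by simp

lemma measurable_history_imp_measurable:
  "f \<in> measurable (history t) N \<Longrightarrow> f \<in> measurable M N"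
  by (rule measurable_from_subalg[OF subalgebra_history])

lemma measurable_A_history:
  assumes "1 \<le> s" "s \<le> t"
  shows "A s \<in> measurable (history t) (count_space UNIV)"
proof (rule measurableI)
  fix S :: "nat set set"
  have "A s -` S \<inter> space M \<in> past_events M K A R D t"
    unfolding past_events_def by (intro UnI1 UN_I[of s]) (use assms in auto)
  then show "A s -` S \<inter> space (history t) \<in> sets (history t)"
    unfolding sets_history space_history by auto
qed auto

lemma measurable_D_history:
  assumes "1 \<le> s" "s < t" "b \<in> {1..K}"
  shows "D s b \<in> measurable (history t) (count_space UNIV)"
proof (rule measurableI)
  fix S :: "enat set"
  have "(UNIV :: real set) \<times> S \<in> sets (borel \<Otimes>\<^sub>M count_space UNIV)" by auto
  then have "(\<lambda>w. (R s b w, D s b w)) -` (UNIV \<times> S) \<inter> space M \<in> pair_events M R D s b"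
    unfolding pair_events_def by blast
  moreover have "(\<lambda>w. (R s b w, D s b w)) -` (UNIV \<times> S) = D s b -` S" by auto
  ultimately have "D s b -` S \<inter> space M \<in> past_events M K A R D t"
    unfolding past_events_def using assms by auto
  then show "D s b -` S \<inter> space (history t) \<in> sets (history t)"
    unfolding sets_history space_history by auto
qed auto

lemma pred_A_history:
  "1 \<le> s \<Longrightarrow> s \<le> t \<Longrightarrow> Measurable.pred (history t) (\<lambda>w. P (A s w))"
  using measurable_compose[OF measurable_A_history, where g = P] by simp

lemma pred_D_history:
  "1 \<le> s \<Longrightarrow> s < t \<Longrightarrow> b \<in> {1..K} \<Longrightarrow> Measurable.pred (history t) (\<lambda>w. P (D s b w))"
  using measurable_compose[OF measurable_D_history, where g = P] by simp

lemma Ncnt_measurable_history: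
  assumes "nat z \<le> t"
  shows "(\<lambda>w. real (Ncnt A z a w)) \<in> borel_measurable (history t)"
  unfolding Ncnt_eq_sum
proof (rule borel_measurable_sum)
  fix s assume "s \<in> {1..<nat z}"
  then have "Measurable.pred (history t) (\<lambda>w. a \<in> A s w)"
    using assms by (intro pred_A_history) auto
  then show "(\<lambda>w. of_bool (a \<in> A s w)) \<in> borel_measurable (history t)"
    by (rule measurable_compose[OF _ measurable_of_bool])
qed

lemma Mcnt_measurable_history:
  assumes "a \<in> {1..K}"
  shows "(\<lambda>w. real (Mcnt A D t a w)) \<in> borel_measurable (history t)"
  unfolding Mcnt_eq_sum
proof (rule borel_measurable_sum)
  fix s assume "s \<in> {1..<t}"
  then have "Measurable.pred (history t) (\<lambda>w. a \<in> A s w \<and> enat s + D s a w < enat t)"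
    using assms by (intro pred_intros_logic pred_A_history pred_D_history) auto
  then show "(\<lambda>w. of_bool (a \<in> A s w \<and> enat s + D s a w < enat t)) \<in> borel_measurable (history t)"
    by (rule measurable_compose[OF _ measurable_of_bool])
qed

lemma Nshift_measurable: "(\<lambda>w. real (Nshift A t d a w)) \<in> borel_measurable M"
  using measurable_history_imp_measurable[OF Ncnt_measurable_history[OF order.refl]]
  by (cases d) (auto simp: Nshift_def)

lemma Int_stable_pair_events: "Int_stable (pair_events M R D t a)"
proof (rule Int_stableI)
  fix x y assume "x \<in> pair_events M R D t a" "y \<in> pair_events M R D t a"
  then obtain S1 S2 where "x = (\<lambda>w. (R t a w, D t a w)) -` S1 \<inter> space M"
      "y = (\<lambda>w. (R t a w, D t a w)) -` S2 \<inter> space M"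
      "S1 \<in> sets (borel \<Otimes>\<^sub>M count_space UNIV)" "S2 \<in> sets (borel \<Otimes>\<^sub>M count_space UNIV)"
    unfolding pair_events_def by blast
  then have "x \<inter> y = (\<lambda>w. (R t a w, D t a w)) -` (S1 \<inter> S2) \<inter> space M"
      "S1 \<inter> S2 \<in> sets (borel \<Otimes>\<^sub>M count_space UNIV)"
    by auto
  then show "x \<inter> y \<in> pair_events M R D t a" unfolding pair_events_def by blast
qed

lemma delay_vimage_in_pair_events:
  fixes h :: "enat \<Rightarrow> real"
  assumes "S \<in> sets borel"
  shows "(\<lambda>w. h (D t a w)) -` S \<inter> space M \<in> pair_events M R D t a"
proof -
  have "(\<lambda>z. h (snd z)) \<in> borel_measurable (borel \<Otimes>\<^sub>M count_space UNIV)"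
    using measurable_compose[OF measurable_snd, where g = h and L = borel] by simp
  then have "(\<lambda>z. h (snd z)) -` S \<inter> space (borel \<Otimes>\<^sub>M count_space UNIV)
      \<in> sets (borel \<Otimes>\<^sub>M count_space UNIV)"
    using assms by (rule measurable_sets)
  moreover have "(\<lambda>w. h (D t a w)) -` S \<inter> space M
      = (\<lambda>w. (R t a w, D t a w)) -` ((\<lambda>z. h (snd z)) -` S \<inter> space (borel \<Otimes>\<^sub>M count_space UNIV))
        \<inter> space M"
    by (auto simp: space_pair_measure)
  ultimately show ?thesis unfolding pair_events_def by blast
qed

lemma indep_var_history_delay:
  fixes Z :: "'w \<Rightarrow> real" and h :: "enat \<Rightarrow> real"
  assumes t: "1 \<le> t" and a: "a \<in> {1..K}" and Z: "Z \<in> borel_measurable (history t)"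
  shows "indep_var borel Z borel (\<lambda>w. h (D t a w))"
  unfolding indep_var_eq
proof (intro conjI)
  show "random_variable borel Z" using measurable_history_imp_measurable[OF Z] .
  show "random_variable borel (\<lambda>w. h (D t a w))"
    using measurable_compose[OF measurable_D[OF t a], where g = h and L = borel] by simp
  have "indep_set (sigma_sets (space M) (sigma_sets (space M) (past_events M K A R D t)))
      (sigma_sets (space M) (pair_events M R D t a))"
  proof (rule indep_set_sigma_sets[OF indep_past[OF t a] _ Int_stable_pair_events])
    show "Int_stable (sigma_sets (space M) (past_events M K A R D t))"
      using sets.Int_stable[of "history t"] unfolding sets_history space_history .
  qed
  then show "indep_set (sigma_sets (space M) {Z -` S \<inter> space M |S. S \<in> sets borel})
      (sigma_sets (space M) {(\<lambda>w. h (D t a w)) -` S \<inter> space M |S. S \<in> sets borel})"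
  proof (rule indep_set_mono)
    show "sigma_sets (space M) {Z -` S \<inter> space M |S. S \<in> sets borel}
        \<subseteq> sigma_sets (space M) (sigma_sets (space M) (past_events M K A R D t))"
      using measurable_sets[OF Z] unfolding sets_history space_history
      by (intro sigma_sets_subseteq) blast
    show "sigma_sets (space M) {(\<lambda>w. h (D t a w)) -` S \<inter> space M |S. S \<in> sets borel}
        \<subseteq> sigma_sets (space M) (pair_events M R D t a)"
      using delay_vimage_in_pair_events by (intro sigma_sets_subseteq) blast
  qed
qed

lemma prob_delay_le:
  assumes t: "1 \<le> t" and a: "a \<in> {1..K}"
  shows "prob {w \<in> space M. D t a w \<le> enat d} = delay_cdf a d"
proof -
  let ?S = "(UNIV :: real set) \<times> {x. x \<le> enat d}"
  have S: "?S \<in> sets (borel \<Otimes>\<^sub>M count_space UNIV)" by auto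
  have "prob {w \<in> space M. D s a w \<le> enat d}
      = measure (distr M (borel \<Otimes>\<^sub>M count_space UNIV) (\<lambda>w. (R s a w, D s a w))) ?S"
    if "1 \<le> s" for s
    by (subst measure_distr[OF measurable_reward_delay[OF that a] S]) (auto intro!: arg_cong[where f = prob])
  then show ?thesis
    unfolding delay_cdf_def using identically_distributed[OF t a] t by simp
qed

definition among_first_plays :: "nat \<Rightarrow> nat \<Rightarrow> nat \<Rightarrow> 'w \<Rightarrow> bool" where
  "among_first_plays a n r w \<longleftrightarrow> a \<in> A r w \<and> Ncnt A (int r) a w < n"

definition exp_process :: "nat \<Rightarrow> nat \<Rightarrow> nat \<Rightarrow> real \<Rightarrow> nat \<Rightarrow> 'w \<Rightarrow> real" where
  "exp_process a d n l t w = exp (\<Sum>r\<in>{1..<t}. of_bool (among_first_plays a n r w) *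
     (l * (delay_cdf a d - of_bool (D r a w \<le> enat d)) - l\<^sup>2 / 8))"

lemma delay_cdf_le_1: "delay_cdf a d \<le> 1"
  unfolding delay_cdf_def by simp

lemma increment_exponent_le:
  assumes "0 \<le> l"
  shows "l * (delay_cdf a d - of_bool P) - l\<^sup>2 / 8 \<le> l"
proof -
  have "l * (delay_cdf a d - of_bool P) \<le> l * 1"
    using delay_cdf_le_1[of a d] assms by (intro mult_left_mono) auto
  moreover have "0 \<le> l\<^sup>2" by simp
  ultimately show ?thesis by linarith
qed

lemma pred_among_first_plays_history:
  assumes "1 \<le> r" "r \<le> t"
  shows "Measurable.pred (history t) (among_first_plays a n r)"
proof -
  have [measurable]: "(\<lambda>w. real (Ncnt A (int r) a w)) \<in> borel_measurable (history t)"
    using Ncnt_measurable_history assms by simp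
  have [measurable]: "Measurable.pred (history t) (\<lambda>w. a \<in> A r w)"
    using pred_A_history assms .
  have "Measurable.pred (history t) (\<lambda>w. a \<in> A r w \<and> real (Ncnt A (int r) a w) < real n)"
    by measurable
  then show ?thesis unfolding among_first_plays_def by simp
qed

lemma exp_process_measurable_history:
  assumes a: "a \<in> {1..K}"
  shows "exp_process a d n l t \<in> borel_measurable (history t)"
proof -
  have [measurable]: "(\<lambda>w. \<Sum>r\<in>{1..<t}. of_bool (among_first_plays a n r w) *
      (l * (delay_cdf a d - of_bool (D r a w \<le> enat d)) - l\<^sup>2 / 8)) \<in> borel_measurable (history t)"
  proof (rule borel_measurable_sum)
    fix r assume r: "r \<in> {1..<t}"
    have [measurable]: "Measurable.pred (history t) (among_first_plays a n r)"
      "Measurable.pred (history t) (\<lambda>w. D r a w \<le> enat d)"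
      using r a by (auto intro: pred_among_first_plays_history pred_D_history)
    show "(\<lambda>w. of_bool (among_first_plays a n r w) *
        (l * (delay_cdf a d - of_bool (D r a w \<le> enat d)) - l\<^sup>2 / 8)) \<in> borel_measurable (history t)"
      by measurable
  qed
  show ?thesis unfolding exp_process_def by measurable
qed

lemma exp_process_le:
  assumes "0 \<le> l"
  shows "exp_process a d n l t w \<le> exp (l * t)"
proof -
  have "of_bool (among_first_plays a n r w) * (l * (delay_cdf a d - of_bool (D r a w \<le> enat d)) - l\<^sup>2 / 8)
      \<le> l" for r
    using increment_exponent_le[OF assms, of a d "D r a w \<le> enat d"] assms by simp
  then have "(\<Sum>r\<in>{1..<t}. of_bool (among_first_plays a n r w) *
      (l * (delay_cdf a d - of_bool (D r a w \<le> enat d)) - l\<^sup>2 / 8)) \<le> (\<Sum>r\<in>{1..<t}. l)"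
    by (rule sum_mono)
  also have "\<dots> = real (t - 1) * l" by simp
  also have "\<dots> \<le> l * t" using assms by (simp add: mult.commute mult_left_mono)
  finally show ?thesis unfolding exp_process_def by simp
qed

lemma exp_process_Suc:
  assumes "1 \<le> t"
  shows "exp_process a d n l (Suc t) w =
    exp_process a d n l t w * (1 - of_bool (among_first_plays a n t w)) +
    exp_process a d n l t w * of_bool (among_first_plays a n t w) *
      exp (l * (delay_cdf a d - of_bool (D t a w \<le> enat d)) - l\<^sup>2 / 8)"
proof -
  let ?c = "of_bool (among_first_plays a n t w) :: real"
  let ?x = "l * (delay_cdf a d - of_bool (D t a w \<le> enat d)) - l\<^sup>2 / 8"
  have "{1..<Suc t} = insert t {1..<t}" using assms by auto
  then have "exp_process a d n l (Suc t) w = exp (?c * ?x) * exp_process a d n l t w"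
    unfolding exp_process_def by (simp add: exp_add)
  also have "exp (?c * ?x) = 1 - ?c + ?c * exp ?x" by simp
  finally show ?thesis by (simp add: algebra_simps)
qed

lemma expectation_increment_le_1:
  assumes t: "1 \<le> t" and a: "a \<in> {1..K}" and l: "0 < l"
  shows "expectation (\<lambda>w. exp (l * (delay_cdf a d - of_bool (D t a w \<le> enat d)) - l\<^sup>2 / 8)) \<le> 1"
proof -
  let ?X = "\<lambda>w. - of_bool (D t a w \<le> enat d) :: real"
  have [measurable]: "D t a \<in> measurable M (count_space UNIV)" using measurable_D[OF t a] .
  interpret X: interval_bounded_random_variable M ?X "-1" 0
    by unfold_locales auto
  have "{w \<in> space M. D t a w \<le> enat d} \<in> events" by measurable
  then have "expectation (\<lambda>w. of_bool (D t a w \<le> enat d))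
      = expectation (indicator {w \<in> space M. D t a w \<le> enat d})"
    by (intro Bochner_Integration.integral_cong) (auto simp: indicator_def)
  also have "\<dots> = delay_cdf a d"
    using prob_delay_le[OF t a] \<open>_ \<in> events\<close> by simp
  finally have EX: "expectation ?X = - delay_cdf a d" by simp
  have "expectation (\<lambda>w. exp (l * (delay_cdf a d - of_bool (D t a w \<le> enat d)) - l\<^sup>2 / 8))
      = expectation (\<lambda>w. exp (- (l\<^sup>2 / 8)) * exp (l * (?X w - expectation ?X)))"
    unfolding EX by (intro Bochner_Integration.integral_cong) (simp_all add: mult_exp_exp algebra_simps)
  also have "\<dots> = exp (- (l\<^sup>2 / 8)) * expectation (\<lambda>w. exp (l * (?X w - expectation ?X)))"
    by (rule integral_mult_right_zero)
  also have "\<dots> \<le> exp (- (l\<^sup>2 / 8)) * exp (l\<^sup>2 / 8)"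
    using X.Hoeffdings_lemma_integral[OF l] by simp
  finally show ?thesis by (simp add: exp_minus)
qed

lemma expectation_exp_process_Suc_le:
  assumes t: "1 \<le> t" and a: "a \<in> {1..K}" and l: "0 < l"
  shows "expectation (exp_process a d n l (Suc t)) \<le> expectation (exp_process a d n l t)"
proof -
  let ?W = "exp_process a d n l t"
  let ?c = "\<lambda>w. of_bool (among_first_plays a n t w) :: real"
  let ?h = "\<lambda>y. exp (l * (delay_cdf a d - of_bool (y \<le> enat d)) - l\<^sup>2 / 8)"
  have [measurable]: "?W \<in> borel_measurable (history t)"
    using exp_process_measurable_history[OF a] .
  have [measurable]: "Measurable.pred (history t) (among_first_plays a n t)"
    using pred_among_first_plays_history[OF t order.refl] .
  have Wc_history: "(\<lambda>w. ?W w * ?c w) \<in> borel_measurable (history t)" by measurable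
  note Wc_measurable = measurable_history_imp_measurable[OF Wc_history]
  have W_bound: "\<bar>?W w\<bar> \<le> exp (l * t)" for w
    using exp_process_le[of l a d n t w] l by (simp add: exp_process_def)
  have h_bound: "\<bar>?h y\<bar> \<le> exp l" for y
    using increment_exponent_le[of l a d "y \<le> enat d"] l by simp
  have int_Wc: "integrable M (\<lambda>w. ?W w * ?c w)"
    by (rule integrable_bounded[OF Wc_measurable, where B = "exp (l * t)"])
       (use W_bound in \<open>simp add: abs_mult\<close>)
  have int_W: "integrable M ?W"
    by (rule integrable_bounded[OF measurable_history_imp_measurable W_bound])
       (rule exp_process_measurable_history[OF a])
  have int_h: "integrable M (\<lambda>w. ?h (D t a w))"
    by (rule integrable_bounded[where B = "exp l"])
       (use h_bound measurable_D[OF t a] in auto)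
  have indep: "indep_var borel (\<lambda>w. ?W w * ?c w) borel (\<lambda>w. ?h (D t a w))"
    by (rule indep_var_history_delay[OF t a Wc_history])
  have Eh: "expectation (\<lambda>w. ?h (D t a w)) \<le> 1"
    by (rule expectation_increment_le_1[OF t a l])
  have Wc_nonneg: "0 \<le> expectation (\<lambda>w. ?W w * ?c w)"
    by (rule integral_nonneg_AE) (simp add: exp_process_def)
  have "expectation (exp_process a d n l (Suc t))
      = expectation (\<lambda>w. ?W w - ?W w * ?c w + ?W w * ?c w * ?h (D t a w))"
    by (intro Bochner_Integration.integral_cong refl) (simp add: exp_process_Suc[OF t] algebra_simps)
  also have "\<dots> = expectation ?W - expectation (\<lambda>w. ?W w * ?c w)
      + expectation (\<lambda>w. ?W w * ?c w) * expectation (\<lambda>w. ?h (D t a w))"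
    using int_W int_Wc indep_var_integrable[OF indep int_Wc int_h]
    by (simp add: indep_var_lebesgue_integral[OF indep int_Wc int_h])
  also have "\<dots> \<le> expectation ?W"
    using mult_left_mono[OF Eh Wc_nonneg] by simp
  finally show ?thesis .
qed

lemma expectation_exp_process_le_1:
  assumes a: "a \<in> {1..K}" and l: "0 < l" and t: "1 \<le> t"
  shows "expectation (exp_process a d n l t) \<le> 1"
  using t
proof (induction t rule: dec_induct)
  case base
  then show ?case by (simp add: exp_process_def prob_space)
next
  case (step t)
  then show ?case using expectation_exp_process_Suc_le[OF _ a l, of t d n] by linarith
qed

definition deviation :: "nat \<Rightarrow> nat \<Rightarrow> nat \<Rightarrow> nat \<Rightarrow> 'w \<Rightarrow> real" where
  "deviation a d n t w = (\<Sum>r\<in>{1..<t}. of_bool (among_first_plays a n r w) *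
     (delay_cdf a d - of_bool (D r a w \<le> enat d)))"

lemma count_among_first_plays_le:
  "(\<Sum>r\<in>{1..<t}. of_bool (among_first_plays a n r w)) \<le> real n"
proof -
  let ?S = "{1..<t} \<inter> {r. among_first_plays a n r w}"
  have "strict_mono_on ?S (\<lambda>r. Ncnt A (int r) a w)"
    by (rule strict_mono_onI) (auto simp: among_first_plays_def Ncnt_less_Ncnt_iff)
  then have "card ?S \<le> card {..<n}"
    by (intro card_inj_on_le strict_mono_on_imp_inj_on) (auto simp: among_first_plays_def)
  then show ?thesis by simp
qed

lemma exp_process_ge_of_deviation_ge:
  assumes n: "0 < n" and \<epsilon>: "0 < \<epsilon>" and dev: "\<epsilon> \<le> deviation a d n t w"
  shows "exp (2 * \<epsilon>\<^sup>2 / n) \<le> exp_process a d n (4 * \<epsilon> / n) t w"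
proof -
  let ?l = "4 * \<epsilon> / n"
  let ?count = "\<Sum>r\<in>{1..<t}. of_bool (among_first_plays a n r w) :: real"
  have "2 * \<epsilon>\<^sup>2 / n = ?l * \<epsilon> - ?l\<^sup>2 / 8 * n"
    using n by (simp add: field_simps power2_eq_square)
  also have "\<dots> \<le> ?l * deviation a d n t w - ?l\<^sup>2 / 8 * ?count"
    using dev \<epsilon> count_among_first_plays_le[where t = t and a = a and n = n and w = w] by (intro diff_mono mult_left_mono) auto
  also have "\<dots> = (\<Sum>r\<in>{1..<t}. of_bool (among_first_plays a n r w) *
      (?l * (delay_cdf a d - of_bool (D r a w \<le> enat d)) - ?l\<^sup>2 / 8))"
    unfolding deviation_def sum_distrib_left sum_subtractf[symmetric]
    by (intro sum.cong) (simp_all add: algebra_simps)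
  finally show ?thesis unfolding exp_process_def by simp
qed

lemma prob_deviation_ge:
  assumes a: "a \<in> {1..K}" and n: "0 < n" and \<epsilon>: "0 < \<epsilon>" and T: "1 \<le> T"
  shows "prob {w \<in> space M. \<epsilon> \<le> deviation a d n T w} \<le> exp (- (2 * \<epsilon>\<^sup>2 / n))"
proof -
  let ?l = "4 * \<epsilon> / n"
  let ?W = "exp_process a d n ?l T"
  have l: "0 < ?l" using \<epsilon> n by simp
  have [measurable]: "?W \<in> borel_measurable M"
    using measurable_history_imp_measurable[OF exp_process_measurable_history[OF a]] .
  have int_W: "integrable M ?W"
    by (rule integrable_bounded[where B = "exp (?l * T)"])
       (use exp_process_le[of ?l a d n T] l in \<open>auto simp: exp_process_def\<close>)
  have "prob {w \<in> space M. \<epsilon> \<le> deviation a d n T w} \<le> prob {w \<in> space M. exp (2 * \<epsilon>\<^sup>2 / n) \<le> ?W w}"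
    using exp_process_ge_of_deviation_ge[OF n \<epsilon>] by (intro finite_measure_mono) auto
  also have "\<dots> \<le> expectation ?W / exp (2 * \<epsilon>\<^sup>2 / n)"
    by (rule integral_Markov_inequality_measure[OF int_W, where A = "space M"])
       (auto simp: exp_process_def)
  also have "\<dots> \<le> 1 / exp (2 * \<epsilon>\<^sup>2 / n)"
    using expectation_exp_process_le_1[OF a l T] by (intro divide_right_mono) auto
  finally show ?thesis by (simp add: exp_minus inverse_eq_divide)
qed

lemma Mcnt_ge_of_deviation_less:
  assumes t: "t \<le> T" and q: "q \<le> delay_cdf a d"
    and dev: "deviation a d (Ncnt A (int t - int d) a w) T w < \<epsilon>"
  shows "q * Ncnt A (int t - int d) a w - \<epsilon> \<le> Mcnt A D t a w"
proof -
  define z where "z = int t - int d"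
  define m where "m = Ncnt A z a w"
  let ?C = "card {r. 1 \<le> r \<and> int r < z \<and> a \<in> A r w \<and> D r a w \<le> enat d}"
  have z: "z \<le> int T" using t unfolding z_def by simp
  have first_plays: "among_first_plays a m r w \<longleftrightarrow> a \<in> A r w \<and> int r < z" if "1 \<le> r" for r
    using that unfolding among_first_plays_def m_def by (auto simp: Ncnt_less_Ncnt_iff)
  have "deviation a d m T w = (\<Sum>r\<in>{1..<T}. delay_cdf a d * of_bool (a \<in> A r w \<and> int r < z)
      - of_bool (a \<in> A r w \<and> int r < z \<and> D r a w \<le> enat d))"
    unfolding deviation_def by (intro sum.cong) (auto simp: first_plays)
  also have "\<dots> = delay_cdf a d * card ({1..<T} \<inter> {r. a \<in> A r w \<and> int r < z})
      - card ({1..<T} \<inter> {r. a \<in> A r w \<and> int r < z \<and> D r a w \<le> enat d})"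
    by (simp add: sum_subtractf sum_distrib_left[symmetric])
  also have "{1..<T} \<inter> {r. a \<in> A r w \<and> int r < z} = {s. 1 \<le> s \<and> int s < z \<and> a \<in> A s w}"
    using z by auto
  also have "{1..<T} \<inter> {r. a \<in> A r w \<and> int r < z \<and> D r a w \<le> enat d}
      = {r. 1 \<le> r \<and> int r < z \<and> a \<in> A r w \<and> D r a w \<le> enat d}"
    using z by auto
  finally have "deviation a d m T w = delay_cdf a d * m - ?C" unfolding m_def Ncnt_def .
  moreover have "q * m \<le> delay_cdf a d * m" using q by (intro mult_right_mono) auto
  moreover have "?C \<le> Mcnt A D t a w" unfolding z_def by (rule card_delay_le_Mcnt)
  ultimately show ?thesis using dev unfolding m_def z_def by linarith
qed

lemma delay_cdf_at_quantile:
  assumes "delay_quantile M D a q = enat d"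
  shows "q \<le> delay_cdf a d"
proof -
  have ex: "\<exists>g::nat. q \<le> prob {w \<in> space M. D 1 a w \<le> enat g}"
    and d: "d = (LEAST g::nat. q \<le> prob {w \<in> space M. D 1 a w \<le> enat g})"
    using assms unfolding delay_quantile_def by (auto split: if_splits)
  show ?thesis unfolding delay_cdf_def d by (rule LeastI_ex[OF ex])
qed

definition deviation_event :: "real \<Rightarrow> nat \<Rightarrow> real \<Rightarrow> nat \<Rightarrow> nat \<Rightarrow> 'w set" where
  "deviation_event q T L a m = (case delay_quantile M D a q of
     enat d \<Rightarrow> {w \<in> space M. sqrt (L * m / 2) \<le> deviation a d m T w}
   | \<infinity> \<Rightarrow> {})"

lemma deviation_event_in_events:
  assumes a: "a \<in> {1..K}"
  shows "deviation_event q T L a m \<in> events"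
proof (cases "delay_quantile M D a q")
  case (enat d)
  have [measurable]: "deviation a d m T \<in> borel_measurable M"
    unfolding deviation_def
  proof (rule borel_measurable_sum)
    fix r assume r: "r \<in> {1..<T}"
    have [measurable]: "Measurable.pred M (among_first_plays a m r)"
      "Measurable.pred M (\<lambda>w. D r a w \<le> enat d)"
      using r a measurable_history_imp_measurable[OF pred_among_first_plays_history[of r T]]
        measurable_history_imp_measurable[OF pred_D_history[of r "Suc r"]] by auto
    show "(\<lambda>w. of_bool (among_first_plays a m r w) * (delay_cdf a d - of_bool (D r a w \<le> enat d)))
        \<in> borel_measurable M" by measurable
  qed
  show ?thesis unfolding deviation_event_def enat by simp
qed (simp add: deviation_event_def)

lemma prob_deviation_event:
  assumes a: "a \<in> {1..K}" and m: "1 \<le> m" and L: "0 < L" and T: "1 \<le> T"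
  shows "prob (deviation_event q T L a m) \<le> exp (- L)"
proof (cases "delay_quantile M D a q")
  case (enat d)
  have "2 * (sqrt (L * m / 2))\<^sup>2 / m = L" using L m by simp
  then show ?thesis
    using prob_deviation_ge[OF a _ _ T, of m "sqrt (L * m / 2)" d] L m
    unfolding deviation_event_def enat by simp
qed (simp add: deviation_event_def)

lemma Mcnt_lower_bound_outside_deviation_events:
  assumes t: "t \<le> T" and L: "0 \<le> L"
    and outside: "\<And>m. m \<in> {1..T} \<Longrightarrow> w \<notin> deviation_event q T L a m" and w: "w \<in> space M"
  shows "q * Nshift A t (delay_quantile M D a q) a w - sqrt (L / 2 * Ncnt A (int t) a w)
    \<le> Mcnt A D t a w"
proof (cases "Nshift A t (delay_quantile M D a q) a w = 0")
  case True
  have "0 \<le> sqrt (L / 2 * Ncnt A (int t) a w)" using L by simp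
  then show ?thesis unfolding True of_nat_0 mult_zero_right by linarith
next
  case False
  then obtain d where d: "delay_quantile M D a q = enat d"
    by (cases "delay_quantile M D a q") (auto simp: Nshift_def)
  define m where "m = Ncnt A (int t - int d) a w"
  have Nshift_eq: "Nshift A t (delay_quantile M D a q) a w = m"
    unfolding Nshift_def d m_def by simp
  then have "m \<in> {1..T}" using False Ncnt_le[of "int t - int d" T] t unfolding m_def by auto
  then have "deviation a d m T w < sqrt (L * m / 2)"
    using outside[of m] w unfolding deviation_event_def d by auto
  then have dev: "q * m - sqrt (L * m / 2) \<le> Mcnt A D t a w"
    using Mcnt_ge_of_deviation_less[OF t delay_cdf_at_quantile[OF d]] unfolding m_def by blast
  have "sqrt (L * m / 2) \<le> sqrt (L / 2 * Ncnt A (int t) a w)"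
    using Ncnt_mono[of "int t - int d" "int t" A a w] L
    unfolding m_def by (intro real_sqrt_le_mono) (simp add: mult_left_mono)
  then show ?thesis unfolding Nshift_eq using dev by linarith
qed

lemma Mcnt_lower_bound_event_in_events:
  fixes q c :: real and T :: nat
  shows "{w \<in> space M. \<forall>t\<in>{1..T}. \<forall>a\<in>{1..K}.
      q * Nshift A t (delay_quantile M D a q) a w - sqrt (c * Ncnt A (int t) a w) \<le> Mcnt A D t a w}
    \<in> events"
proof (intro sets.sets_Collect_finite_All ballI)
  fix t a assume a: "a \<in> {1..K}"
  have [measurable]: "(\<lambda>w. real (Mcnt A D t a w)) \<in> borel_measurable M"
    "(\<lambda>w. real (Ncnt A (int t) a w)) \<in> borel_measurable M"
    "(\<lambda>w. real (Nshift A t (delay_quantile M D a q) a w)) \<in> borel_measurable M"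
    using measurable_history_imp_measurable[OF Mcnt_measurable_history[OF a]]
      measurable_history_imp_measurable[OF Ncnt_measurable_history[OF order.refl]]
      Nshift_measurable by auto
  show "{w \<in> space M. q * Nshift A t (delay_quantile M D a q) a w
      - sqrt (c * Ncnt A (int t) a w) \<le> Mcnt A D t a w} \<in> events"
    by measurable
qed auto

lemma prob_Mcnt_lower_bound:
  fixes q \<delta> :: real
  assumes K: "1 \<le> K" and T: "1 \<le> T" and \<delta>: "0 < \<delta>" "\<delta> < 1"
  shows "1 - \<delta> / 3 \<le> prob {w \<in> space M. \<forall>t\<in>{1..T}. \<forall>a\<in>{1..K}.
            q * Nshift A t (delay_quantile M D a q) a w
              - sqrt (ln (3 * real K * real T / \<delta>) / 2 * Ncnt A (int t) a w) \<le> Mcnt A D t a w}"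
    (is "_ \<le> prob ?good")
proof -
  define L where "L = ln (3 * real K * real T / \<delta>)"
  define U where "U = (\<Union>p\<in>{1..K} \<times> {1..T}. deviation_event q T L (fst p) (snd p))"
  have "1 \<le> real K * real T" using mult_mono[of 1 "real K" 1 "real T"] K T by simp
  then have L: "0 < L" "exp (- L) = \<delta> / (3 * K * T)"
    using \<delta> unfolding L_def by (simp_all add: exp_minus)
  have U: "U \<in> events" unfolding U_def using deviation_event_in_events by auto
  have "prob U \<le> (\<Sum>p\<in>{1..K} \<times> {1..T}. prob (deviation_event q T L (fst p) (snd p)))"
    unfolding U_def by (rule measure_UNION_le) (auto intro: deviation_event_in_events)
  also have "\<dots> \<le> (\<Sum>p\<in>{1..K} \<times> {1..T}. \<delta> / (3 * K * T))"
    using prob_deviation_event[OF _ _ L(1) T] L(2) by (intro sum_mono) force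
  also have "\<dots> = \<delta> / 3" using K T by simp
  finally have "1 - \<delta> / 3 \<le> prob (space M - U)" using U by (simp add: prob_compl)
  also have "\<dots> \<le> prob ?good"
  proof (rule finite_measure_mono)
    show "space M - U \<subseteq> ?good"
    proof
      fix w assume w: "w \<in> space M - U"
      have outside: "w \<notin> deviation_event q T L a m" if "a \<in> {1..K}" "m \<in> {1..T}" for a m
      proof -
        have "(a, m) \<in> {1..K} \<times> {1..T}" using that by simp
        then have "deviation_event q T L a m \<subseteq> U"
          using UN_upper[of _ _ "\<lambda>p. deviation_event q T L (fst p) (snd p)"] unfolding U_def by force
        then show ?thesis using w by blast
      qed
      have "q * Nshift A t (delay_quantile M D a q) a w - sqrt (L / 2 * Ncnt A (int t) a w)
          \<le> Mcnt A D t a w" if "t \<in> {1..T}" "a \<in> {1..K}" for t a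
        using Mcnt_lower_bound_outside_deviation_events[OF _ _ outside[OF that(2)]] that(1) w L(1)
        by simp
      then show "w \<in> ?good" using w unfolding L_def by simp
    qed
    show "?good \<in> events" by (rule Mcnt_lower_bound_event_in_events)
  qed
  finally show ?thesis .
qed

end

theorem mainTheorem9:
  fixes M :: "'w measure"
    and K T L :: nat
    and A :: "nat \<Rightarrow> 'w \<Rightarrow> nat set"
    and R :: "nat \<Rightarrow> nat \<Rightarrow> 'w \<Rightarrow> real"
    and D :: "nat \<Rightarrow> nat \<Rightarrow> 'w \<Rightarrow> enat"
    and q \<delta> :: real
  assumes "prob_space M"
    and "1 \<le> K" and "1 \<le> T"
    and "\<And>t w. 1 \<le> t \<Longrightarrow> w \<in> space M \<Longrightarrow> A t w \<subseteq> {1..K} \<and> card (A t w) = L"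
    and "\<And>t. 1 \<le> t \<Longrightarrow> A t \<in> measurable M (count_space UNIV)"
    and "\<And>t a. 1 \<le> t \<Longrightarrow> a \<in> {1..K} \<Longrightarrow> R t a \<in> borel_measurable M"
    and "\<And>t a. 1 \<le> t \<Longrightarrow> a \<in> {1..K} \<Longrightarrow> D t a \<in> measurable M (count_space UNIV)"
    and "\<And>t a w. 1 \<le> t \<Longrightarrow> a \<in> {1..K} \<Longrightarrow> w \<in> space M \<Longrightarrow> R t a w \<in> {0..1}"
    and "\<And>t a. 1 \<le> t \<Longrightarrow> a \<in> {1..K} \<Longrightarrow>
           distr M (borel \<Otimes>\<^sub>M count_space UNIV) (\<lambda>w. (R t a w, D t a w))
         = distr M (borel \<Otimes>\<^sub>M count_space UNIV) (\<lambda>w. (R 1 a w, D 1 a w))"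
    and "\<And>t a. 1 \<le> t \<Longrightarrow> a \<in> {1..K} \<Longrightarrow>
           prob_space.indep_set M (sigma_sets (space M) (past_events M K A R D t)) (pair_events M R D t a)"
    and "0 < q" and "q \<le> 1" and "0 < \<delta>" and "\<delta> < 1"
  shows "measure M {w \<in> space M. \<forall>t\<in>{1..T}. \<forall>a\<in>{1..K}.
            real (Mcnt A D t a w) \<ge>
              q * real (Nshift A t (delay_quantile M D a q) a w)
              - sqrt (ln (3 * real K * real T / \<delta>) / 2 * real (Ncnt A (int t) a w))}
         \<ge> 1 - \<delta> / 3"
proof -
  interpret delayed_semibandit M K A R D
    by (rule delayed_semibandit.intro[OF assms(1) delayed_semibandit_axioms.intro[OF assms(5,6,7,9,10)]])
  show ?thesis
    using prob_Mcnt_lower_bound[OF assms(2,3,13,14)] by simp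
qed

end
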